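(* Let $I=[a,b]$, $a=x_0<x_1<\cdots<x_N=b$, $I_n=[x_{n-1},x_n]$, $Y_0,\dots,Y_N\in\mathcal{K}(\mathbb{R})$, and let $L_n,\Omega_n$ ($n=1,\dots,N$) be as follows: $L_n:I\to I_n$ is a homeomorphism with $L_n(x_0)=x_{n-1}$, $L_n(x_N)=x_n$, $|L_n(x)-L_n(y)|\le\gamma_n|x-y|$ with $0<\gamma_n<1$; $\Omega_n:I\times\mathcal{K}(\mathbb{R})\to\mathcal{K}(\mathbb{R})$ is continuous with $\Omega_n(x_0,Y_0)=Y_{n-1}$, $\Omega_n(x_N,Y_N)=Y_n$ and $\mathfrak{H}(\Omega_n(x,Y),\Omega_n(x,Y_* ))\le\phi_n(\mathfrak{H}(Y,Y_* ))$ with $\phi_n:\mathbb{R}_+\to\mathbb{R}_+$ increasing and $\phi_n(t)/t<1$ decreasing for $t>0$. Let $\mathcal{J}$ be the IFS $\{I\times\mathcal{K}(\mathbb{R});\mathcal{W}_n(x,Y)=(L_n(x),\Omega_n(x,Y)),\ n=1,\dots,N\}$ with attractor the graph $\mathcal{G}_*(f)$ of the associated continuous fractal function $f:I\to\mathcal{K}(\mathbb{R})$. Let $p=(p_n)$ and $\tilde p=(\tilde p_n)$ be probability vectors with $p\ne\tilde p$, and let $\mu_p,\mu_{\tilde p}$ be the Borel probability measures on $\mathcal{G}_*(f)$ with $\mu_p=\sum_n p_n\mu_p\circ\mathcal{W}_n^{-1}$ and $\mu_{\tilde p}=\sum_n\tilde p_n\mu_{\tilde p}\circ\mathcal{W}_n^{-1}$.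 Then $\mu_p$ and $\mu_{\tilde p}$ are mutually singular.
   Context: $\mathcal{K}(\mathbb{R})$: non-empty compact subsets of $\mathbb{R}$ with Hausdorff distance $\mathfrak{H}$; $I\times\mathcal{K}(\mathbb{R})$ has metric $d((x,Y),(x_*,Y_* ))=|x-x_*|+\mathfrak{H}(Y,Y_* )$. The fractal function $f$ is the unique continuous $f:I\to\mathcal{K}(\mathbb{R})$ with $f(x_n)=Y_n$ and $f(x)=\Omega_n(L_n^{-1}(x),f(L_n^{-1}(x)))$ for $x\in I_n$; $\mathcal{G}_*(f)=\{(x,f(x)):x\in I\}$. *)

theory Defs
  imports "HOL-Analysis.Analysis" "HOL-Probability.Probability"
begin

definition hausdorff_dist :: "'a::metric_space set \<Rightarrow> 'a set \<Rightarrow> real" where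
  "hausdorff_dist A B = max (SUP a\<in>A. infdist a B) (SUP b\<in>B. infdist b A)"

lemma hd_bdd:
  fixes A B :: "'a::heine_borel set"
  assumes "compact A"
  shows "bdd_above ((\<lambda>a. infdist a B) ` A)"
proof -
  have "continuous_on A (\<lambda>a. infdist a B)"
    by (intro continuous_intros)
  then have "compact ((\<lambda>a. infdist a B) ` A)"
    using assms compact_continuous_image by blast
  then show ?thesis by (intro bounded_imp_bdd_above compact_imp_bounded)
qed

lemma hd_upper1:
  fixes A B :: "'a::heine_borel set"
  assumes "compact A" "a \<in> A"
  shows "infdist a B \<le> hausdorff_dist A B"
proof -
  have "infdist a B \<le> (SUP a\<in>A. infdist a B)"
    using assms hd_bdd by (intro cSUP_upper) auto
  then show ?thesis unfolding hausdorff_dist_def by linarith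
qed

lemma hd_upper2:
  fixes A B :: "'a::heine_borel set"
  assumes "compact B" "b \<in> B"
  shows "infdist b A \<le> hausdorff_dist A B"
proof -
  have "infdist b A \<le> (SUP b\<in>B. infdist b A)"
    using assms hd_bdd by (intro cSUP_upper) auto
  then show ?thesis unfolding hausdorff_dist_def by linarith
qed

lemma hd_least:
  fixes A B :: "'a::heine_borel set"
  assumes "A \<noteq> {}" "B \<noteq> {}" "\<And>a. a \<in> A \<Longrightarrow> infdist a B \<le> e"
    "\<And>b. b \<in> B \<Longrightarrow> infdist b A \<le> e"
  shows "hausdorff_dist A B \<le> e"
  unfolding hausdorff_dist_def using assms by (auto intro!: cSUP_least)

lemma hd_sym: "hausdorff_dist A B = hausdorff_dist B A"
  unfolding hausdorff_dist_def by simp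

lemma hd_nonneg:
  fixes A B :: "'a::heine_borel set"
  assumes "compact A" "A \<noteq> {}"
  shows "0 \<le> hausdorff_dist A B"
proof -
  obtain a where "a \<in> A" using assms by blast
  then show ?thesis using hd_upper1[OF assms(1)] infdist_nonneg order_trans by blast
qed

lemma hd_pt_tri:
  fixes A B C :: "'a::heine_borel set"
  assumes "compact C" "C \<noteq> {}"
  shows "infdist a B \<le> infdist a C + hausdorff_dist C B"
proof -
  obtain c where c: "c \<in> C" "infdist a C = dist a c"
    using infdist_attains_inf[of C a] assms compact_imp_closed by blast
  have "infdist a B \<le> infdist c B + dist a c" by (rule infdist_triangle)
  also have "infdist c B \<le> hausdorff_dist C B" using hd_upper1 assms c by blast
  finally show ?thesis using c by simp
qed

typedef kreal = "{S :: real set. S \<noteq> {} \<and> compact S}"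
  by (rule exI[of _ "{0}"]) auto

setup_lifting type_definition_kreal

instantiation kreal :: metric_space
begin

lift_definition dist_kreal :: "kreal \<Rightarrow> kreal \<Rightarrow> real" is hausdorff_dist .

definition uniformity_kreal :: "(kreal \<times> kreal) filter"
  where "uniformity_kreal = (INF e\<in>{0 <..}. principal {(x, y). dist x y < e})"

definition open_kreal :: "kreal set \<Rightarrow> bool"
  where "open_kreal S = (\<forall>x\<in>S. \<forall>\<^sub>F (x', y) in uniformity. x' = x \<longrightarrow> y \<in> S)"

instance
proof
  fix X Y Z :: kreal
  show "dist X Y = 0 \<longleftrightarrow> X = Y"
  proof transfer
    fix A B :: "real set"
    assume A: "A \<noteq> {} \<and> compact A" and B: "B \<noteq> {} \<and> compact B"
    show "hausdorff_dist A B = 0 \<longleftrightarrow> A = B"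
    proof
      assume h: "hausdorff_dist A B = 0"
      have "A \<subseteq> B"
      proof
        fix a assume "a \<in> A"
        then have "infdist a B = 0" using hd_upper1[of A a B] A h infdist_nonneg[of a B] by linarith
        then show "a \<in> B" using B in_closed_iff_infdist_zero compact_imp_closed by blast
      qed
      moreover have "B \<subseteq> A"
      proof
        fix b assume "b \<in> B"
        then have "infdist b A = 0" using hd_upper2[of B b A] B h infdist_nonneg[of b A] by linarith
        then show "b \<in> A" using A in_closed_iff_infdist_zero compact_imp_closed by blast
      qed
      ultimately show "A = B" by blast
    next
      assume "A = B"
      then show "hausdorff_dist A B = 0"
        unfolding hausdorff_dist_def using B by (simp add: cSUP_const)
    qed
  qed
  show "dist X Y \<le> dist X Z + dist Y Z"
  proof transfer
    fix A B C :: "real set"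
    assume A: "A \<noteq> {} \<and> compact A" and B: "B \<noteq> {} \<and> compact B" and C: "C \<noteq> {} \<and> compact C"
    show "hausdorff_dist A B \<le> hausdorff_dist A C + hausdorff_dist B C"
    proof (rule hd_least)
      fix a assume a: "a \<in> A"
      have "infdist a B \<le> infdist a C + hausdorff_dist C B" using hd_pt_tri C by blast
      also have "infdist a C \<le> hausdorff_dist A C" using hd_upper1 A a by blast
      finally show "infdist a B \<le> hausdorff_dist A C + hausdorff_dist B C" by (simp add: hd_sym)
    next
      fix b assume b: "b \<in> B"
      have "infdist b A \<le> infdist b C + hausdorff_dist C A" using hd_pt_tri C by blast
      also have "infdist b C \<le> hausdorff_dist B C" using hd_upper1 B b by blast
      finally show "infdist b A \<le> hausdorff_dist A C + hausdorff_dist B C" by (simp add: hd_sym)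
    qed (use A B in auto)
  qed
qed (rule open_kreal_def uniformity_kreal_def)+

end

end

theory Submission
  imports Defs
begin

text \<open>
  Code a word \<open>n\<^sub>1 \<dots> n\<^sub>k\<close> by the cylinder \<open>L\<^sub>n\<^sub>1 \<circ> \<dots> \<circ> L\<^sub>n\<^sub>k ([a,b])\<close>, using
  half-open intervals so that the cylinders of each length partition \<open>[a,b]\<close>.  Invariance gives
  \<open>\<mu>\<^sub>p(C\<^sub>n\<^sub>w) \<le> p\<^sub>n \<mu>\<^sub>p(C\<^sub>w)\<close> for the preimages of cylinders under the first coordinate,
  so the Hellinger affinity \<open>\<Sum> sqrt (\<mu>\<^sub>p(C\<^sub>w) \<mu>\<^sub>q(C\<^sub>w))\<close> over the words of length \<open>k\<close>
  is at most \<open>\<rho>\<^sup>k\<close>, where \<open>\<rho> = \<Sum> sqrt (p\<^sub>n q\<^sub>n) < 1\<close> because \<open>p \<noteq> q\<close>.  The union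
  \<open>A\<^sub>k\<close> of the cylinders of length \<open>k\<close> on which \<open>\<mu>\<^sub>p \<le> \<mu>\<^sub>q\<close> then has
  \<open>\<mu>\<^sub>p(A\<^sub>k) \<le> \<rho>\<^sup>k\<close> and \<open>\<mu>\<^sub>q(- A\<^sub>k) \<le> \<rho>\<^sup>k\<close>, and by Borel--Cantelli
  \<open>limsup A\<^sub>k\<close> separates the two measures.
\<close>

lemma sqrt_mult_less_average:
  fixes u v :: real
  assumes "0 \<le> u" "0 \<le> v" "u \<noteq> v"
  shows "sqrt (u * v) < (u + v) / 2"
proof -
  have "0 < (sqrt u - sqrt v)\<^sup>2"
    using assms by simp
  then show ?thesis
    using assms by (simp add: power2_diff real_sqrt_mult)
qed

lemma sum_sqrt_mult_less_one:
  fixes p q :: "'i \<Rightarrow> real"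
  assumes "finite I" and "\<forall>i\<in>I. 0 \<le> p i" "\<forall>i\<in>I. 0 \<le> q i"
    and "sum p I = 1" "sum q I = 1" and "\<exists>i\<in>I. p i \<noteq> q i"
  shows "(\<Sum>i\<in>I. sqrt (p i * q i)) < 1"
proof -
  have "(\<Sum>i\<in>I. sqrt (p i * q i)) < (\<Sum>i\<in>I. (p i + q i) / 2)"
  proof (rule sum_strict_mono_ex1)
    show "\<forall>i\<in>I. sqrt (p i * q i) \<le> (p i + q i) / 2"
      using assms arith_geo_mean_sqrt by simp
    show "\<exists>i\<in>I. sqrt (p i * q i) < (p i + q i) / 2"
      using assms sqrt_mult_less_average by blast
  qed fact
  also have "\<dots> = 1"
    using assms by (simp add: sum_divide_distrib[symmetric] sum.distrib)
  finally show ?thesis .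
qed

lemma sum_lists_length_le_power:
  fixes g :: "'i list \<Rightarrow> real" and c :: "'i \<Rightarrow> real"
  assumes "finite I" and c_nonneg: "\<And>i. i \<in> I \<Longrightarrow> 0 \<le> c i"
    and g_Cons: "\<And>i w. i \<in> I \<Longrightarrow> set w \<subseteq> I \<Longrightarrow> g (i # w) \<le> c i * g w"
  shows "(\<Sum>w\<in>{w. set w \<subseteq> I \<and> length w = k}. g w) \<le> (\<Sum>i\<in>I. c i) ^ k * g []"
proof (induction k)
  case 0
  have "{w. set w \<subseteq> I \<and> length w = 0} = {[]}"
    by auto
  then show ?case
    by simp
next
  case (Suc k)
  let ?W = "{w. set w \<subseteq> I \<and> length w = k}"
  have "inj_on (\<lambda>(w, i). i # w) (?W \<times> I)"
    by (auto simp: inj_on_def)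
  then have "(\<Sum>w\<in>{w. set w \<subseteq> I \<and> length w = Suc k}. g w) = (\<Sum>(w, i)\<in>?W \<times> I. g (i # w))"
    by (simp add: lists_length_Suc_eq sum.reindex case_prod_unfold)
  also have "\<dots> \<le> (\<Sum>(w, i)\<in>?W \<times> I. c i * g w)"
    using g_Cons by (intro sum_mono) auto
  also have "\<dots> = (\<Sum>w\<in>?W. \<Sum>i\<in>I. c i * g w)"
    by (rule sum.cartesian_product[symmetric])
  also have "\<dots> = (\<Sum>i\<in>I. c i) * (\<Sum>w\<in>?W. g w)"
    by (simp add: sum_distrib_left sum_distrib_right)
  also have "\<dots> \<le> (\<Sum>i\<in>I. c i) * ((\<Sum>i\<in>I. c i) ^ k * g [])"
    using Suc.IH c_nonneg by (intro mult_left_mono sum_nonneg) auto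
  finally show ?case
    by simp
qed

lemma measure_UN_le_sum_sqrt:
  assumes "finite_measure M" "finite V" "\<And>w. w \<in> V \<Longrightarrow> C w \<in> sets M"
    and le: "\<And>w. w \<in> V \<Longrightarrow> measure M (C w) \<le> m w"
  shows "measure M (\<Union>w\<in>V. C w) \<le> (\<Sum>w\<in>V. sqrt (measure M (C w) * m w))"
proof -
  have "measure M (\<Union>w\<in>V. C w) \<le> (\<Sum>w\<in>V. measure M (C w))"
    using assms by (intro finite_measure.finite_measure_subadditive_finite) auto
  also have "\<dots> \<le> (\<Sum>w\<in>V. sqrt (measure M (C w) * m w))"
  proof (rule sum_mono)
    fix w assume "w \<in> V"
    then have "measure M (C w) * measure M (C w) \<le> measure M (C w) * m w"
      using le by (simp add: mult_left_mono)
    then show "measure M (C w) \<le> sqrt (measure M (C w) * m w)"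
      using real_sqrt_le_mono by fastforce
  qed
  finally show ?thesis .
qed

lemma separating_set_of_affinity:
  fixes \<mu> \<nu> :: "'a measure" and C :: "'w \<Rightarrow> 'a set"
  assumes \<mu>: "finite_measure \<mu>" and \<nu>: "finite_measure \<nu>" and sets_eq: "sets \<nu> = sets \<mu>"
    and "finite W" and C: "\<And>w. w \<in> W \<Longrightarrow> C w \<in> sets \<mu>"
    and cover: "space \<nu> - (\<Union>w\<in>W. C w) \<in> null_sets \<nu>"
  defines "S \<equiv> (\<Sum>w\<in>W. sqrt (measure \<mu> (C w) * measure \<nu> (C w)))"
  shows "\<exists>A\<in>sets \<mu>. measure \<mu> A \<le> S \<and> measure \<nu> (space \<nu> - A) \<le> S"
proof -
  define V where "V = {w\<in>W. measure \<mu> (C w) \<le> measure \<nu> (C w)}"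
  define A where "A = (\<Union>w\<in>V. C w)"
  define B where "B = (\<Union>w\<in>W - V. C w)"
  have "finite V" "V \<subseteq> W" "finite (W - V)"
    using \<open>finite W\<close> by (auto simp: V_def)
  have part_le_S: "(\<Sum>w\<in>U. sqrt (measure \<mu> (C w) * measure \<nu> (C w))) \<le> S" if "U \<subseteq> W" for U
    using that \<open>finite W\<close> unfolding S_def by (intro sum_mono2) auto
  have "A \<in> sets \<mu>" "B \<in> sets \<nu>"
    using \<open>finite V\<close> \<open>V \<subseteq> W\<close> \<open>finite (W - V)\<close> C sets_eq unfolding A_def B_def
    by (auto intro!: sets.finite_UN)
  moreover have "measure \<mu> A \<le> S"
  proof -
    have "measure \<mu> A \<le> (\<Sum>w\<in>V. sqrt (measure \<mu> (C w) * measure \<nu> (C w)))"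
      unfolding A_def by (rule measure_UN_le_sum_sqrt[OF \<mu> \<open>finite V\<close>])
        (use C in \<open>auto simp: V_def\<close>)
    then show ?thesis
      using part_le_S[OF \<open>V \<subseteq> W\<close>] by linarith
  qed
  moreover have "measure \<nu> (space \<nu> - A) \<le> S"
  proof -
    have "space \<nu> - A \<subseteq> (space \<nu> - (\<Union>w\<in>W. C w)) \<union> B"
      unfolding A_def B_def by blast
    then have "measure \<nu> (space \<nu> - A) \<le> measure \<nu> ((space \<nu> - (\<Union>w\<in>W. C w)) \<union> B)"
      using cover \<open>B \<in> sets \<nu>\<close> by (intro finite_measure.finite_measure_mono[OF \<nu>]) auto
    also have "\<dots> \<le> measure \<nu> (space \<nu> - (\<Union>w\<in>W. C w)) + measure \<nu> B"
      using cover \<open>B \<in> sets \<nu>\<close> by (intro measure_Un_le) auto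
    also have "measure \<nu> B \<le> (\<Sum>w\<in>W - V. sqrt (measure \<nu> (C w) * measure \<mu> (C w)))"
      unfolding B_def by (rule measure_UN_le_sum_sqrt[OF \<nu> \<open>finite (W - V)\<close>])
        (use C sets_eq in \<open>auto simp: V_def\<close>)
    finally show ?thesis
      using part_le_S[of "W - V"] null_setsD1[OF cover] by (simp add: measure_def mult.commute)
  qed
  ultimately show ?thesis
    by blast
qed

lemma mutually_singular_if_summable:
  fixes \<mu> \<nu> :: "'a measure"
  assumes \<mu>: "finite_measure \<mu>" and \<nu>: "finite_measure \<nu>" and sets_eq: "sets \<nu> = sets \<mu>"
    and A: "\<And>k. A k \<in> sets \<mu>"
    and summable_\<mu>: "summable (\<lambda>k. measure \<mu> (A k))"
    and summable_\<nu>: "summable (\<lambda>k. measure \<nu> (space \<nu> - A k))"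
  shows "\<exists>S\<in>sets \<mu>. emeasure \<mu> S = 0 \<and> emeasure \<nu> (space \<nu> - S) = 0"
proof -
  have "limsup A \<in> null_sets \<mu>"
    using A summable_\<mu> by (intro borel_cantelli_limsup1) (auto simp: finite_measure.emeasure_eq_measure[OF \<mu>])
  moreover have "limsup (\<lambda>k. space \<nu> - A k) \<in> null_sets \<nu>"
    using A summable_\<nu> sets_eq
    by (intro borel_cantelli_limsup1) (auto simp: finite_measure.emeasure_eq_measure[OF \<nu>])
  moreover have "space \<nu> - limsup A \<subseteq> limsup (\<lambda>k. space \<nu> - A k)"
    by (auto simp: mem_limsup_iff not_frequently intro: eventually_frequently[OF sequentially_bot])
  moreover have "space \<nu> - limsup A \<in> sets \<nu>"
    using null_setsD2[OF \<open>limsup A \<in> null_sets \<mu>\<close>] sets_eq by auto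
  ultimately have "space \<nu> - limsup A \<in> null_sets \<nu>"
    by (blast intro: null_sets_subset)
  with \<open>limsup A \<in> null_sets \<mu>\<close> show ?thesis
    by blast
qed

lemma homeomorphism_image_in_borel:
  assumes "homeomorphism S T f g" and "T \<in> sets borel" and "E \<in> sets borel" "E \<subseteq> S"
  shows "f ` E \<in> sets borel"
proof -
  define h where "h y = (if y \<in> T then g y else undefined)" for y
  have "h \<in> borel_measurable borel"
    unfolding h_def using assms(1,2)
    by (intro borel_measurable_continuous_on_if) (auto simp: homeomorphism_def)
  moreover have "f ` E = h -` E \<inter> T"
    using assms(1,4) unfolding homeomorphism_def h_def by force
  ultimately show ?thesis
    using measurable_sets[of h borel borel E] assms(2,3) by auto
qed

locale interval_ifs =
  fixes a b :: real and N :: nat and x :: "nat \<Rightarrow> real" and L :: "nat \<Rightarrow> real \<Rightarrow> real"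
  assumes N_pos: "0 < N" and x_0: "x 0 = a" and x_N: "x N = b"
    and x_incr: "\<forall>k<N. x k < x (Suc k)"
    and L_homeo: "\<forall>n\<in>{1..N}. \<exists>g. homeomorphism {a..b} {x (n - 1)..x n} (L n) g"
    and L_ends: "\<forall>n\<in>{1..N}. L n (x 0) = x (n - 1) \<and> L n (x N) = x n"
begin

lemma x_less: "i < j \<Longrightarrow> j \<le> N \<Longrightarrow> x i < x j"
proof (induction j)
  case (Suc j)
  have "x j < x (Suc j)"
    using Suc.prems x_incr by simp
  then show ?case
    using Suc by (cases "i = j") auto
qed simp

lemma x_le: "i \<le> j \<Longrightarrow> j \<le> N \<Longrightarrow> x i \<le> x j"
  using x_less by (cases "i = j") (auto intro: less_imp_le)

lemma a_less_b: "a < b"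
  using x_less[of 0 N] N_pos x_0 x_N by simp

lemma L_image: "n \<in> {1..N} \<Longrightarrow> L n ` {a..b} = {x (n - 1)..x n}"
  using L_homeo unfolding homeomorphism_def by blast

lemma L_inj_on: "n \<in> {1..N} \<Longrightarrow> inj_on (L n) {a..b}"
  using L_homeo homeomorphism_apply1 by (metis inj_on_inverseI)

lemma L_b: "n \<in> {1..N} \<Longrightarrow> L n b = x n"
  using L_ends x_N by auto

lemma L_in_interval: "n \<in> {1..N} \<Longrightarrow> t \<in> {a..b} \<Longrightarrow> L n t \<in> {x (n - 1)..x n}"
  using L_image by blast

lemma subinterval_subset: "n \<in> {1..N} \<Longrightarrow> {x (n - 1)..x n} \<subseteq> {a..b}"
  using x_le[of 0 "n - 1"] x_le[of n N] x_0 x_N by auto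

lemma L_image_in_borel:
  assumes "n \<in> {1..N}" "E \<in> sets borel" "E \<subseteq> {a..b}"
  shows "L n ` E \<in> sets borel"
proof -
  obtain g where g: "homeomorphism {a..b} {x (n - 1)..x n} (L n) g"
    using L_homeo assms(1) by blast
  show ?thesis
    using assms(2,3) by (intro homeomorphism_image_in_borel[OF g]) auto
qed

definition piece :: "nat \<Rightarrow> real set" where
  "piece n = {x (n - 1)..<x n} \<union> (if n = N then {b} else {})"

lemma piece_in_borel: "piece n \<in> sets borel"
  unfolding piece_def by auto

lemma piece_subset: "n \<in> {1..N} \<Longrightarrow> piece n \<subseteq> {x (n - 1)..x n}"
  unfolding piece_def using x_le[of "n - 1" n] x_N by auto

lemma pieces_cover:
  assumes "t \<in> {a..b}"
  shows "\<exists>n\<in>{1..N}. t \<in> piece n"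
proof (cases "t = b")
  case True
  then show ?thesis
    using N_pos unfolding piece_def by auto
next
  case False
  then have "t < x N"
    using assms x_N by auto
  define n where "n = (LEAST n. t < x n)"
  have "t < x n"
    unfolding n_def by (rule LeastI[of _ N]) fact
  moreover have "n \<le> N"
    unfolding n_def by (rule Least_le) fact
  moreover have "n \<noteq> 0"
    using \<open>t < x n\<close> x_0 assms by (cases n) auto
  moreover have "\<not> t < x (n - 1)"
    unfolding n_def by (rule not_less_Least) (use \<open>n \<noteq> 0\<close> n_def in auto)
  ultimately show ?thesis
    unfolding piece_def by (intro bexI[of _ n]) auto
qed

lemma L_in_other_pieceD:
  assumes m: "m \<in> {1..N}" and n: "n \<in> {1..N}" and "m \<noteq> n"
    and t: "t \<in> {a..b}" and L_t: "L m t \<in> piece n"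
  shows "t = b \<and> m < N"
proof (cases "m < n")
  case True
  have "x m \<le> x (n - 1)"
    using x_le[of m "n - 1"] True n by auto
  moreover have "x (n - 1) \<le> L m t"
    using L_t piece_subset[OF n] by auto
  ultimately have "L m t = L m b"
    using L_in_interval[OF m t] L_b[OF m] by auto
  then have "t = b"
    using L_inj_on[OF m] t a_less_b by (auto dest: inj_onD)
  then show ?thesis
    using True n by auto
next
  case False
  then have "n < m"
    using \<open>m \<noteq> n\<close> by auto
  then have "L m t < x n"
    using L_t m unfolding piece_def by auto
  moreover have "x n \<le> x (m - 1)"
    using x_le[of n "m - 1"] \<open>n < m\<close> m by auto
  ultimately show ?thesis
    using L_in_interval[OF m t] by auto
qed

lemma L_eq_bD:
  assumes m: "m \<in> {1..N}" and t: "t \<in> {a..b}" and "L m t = b"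
  shows "t = b \<and> m = N"
proof (cases "m = N")
  case True
  then have "L m t = L m b"
    using L_b[OF m] x_N assms(3) by simp
  then show ?thesis
    using inj_onD[OF L_inj_on[OF m]] t a_less_b True by auto
next
  case False
  then have "x m < x N"
    using x_less[of m N] m by auto
  then show ?thesis
    using L_in_interval[OF m t] assms x_N by auto
qed

primrec cylinder :: "nat list \<Rightarrow> real set" where
  "cylinder [] = {a..b}"
| "cylinder (n # w) = L n ` cylinder w \<inter> piece n"

definition words :: "nat \<Rightarrow> nat list set" where
  "words k = {w. set w \<subseteq> {1..N} \<and> length w = k}"

lemma finite_words: "finite (words k)"
  unfolding words_def by (rule finite_lists_length_eq) simp

lemma cylinder_subset: "set w \<subseteq> {1..N} \<Longrightarrow> cylinder w \<subseteq> {a..b}"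
  by (cases w) (use piece_subset subinterval_subset in fastforce)+

lemma cylinder_in_borel: "set w \<subseteq> {1..N} \<Longrightarrow> cylinder w \<in> sets borel"
proof (induction w)
  case (Cons n w)
  then show ?case
    using L_image_in_borel cylinder_subset piece_in_borel by auto
qed simp

lemma cylinders_cover: "t \<in> {a..b} \<Longrightarrow> \<exists>w\<in>words k. t \<in> cylinder w"
proof (induction k arbitrary: t)
  case 0
  then show ?case
    unfolding words_def by auto
next
  case (Suc k)
  obtain n where n: "n \<in> {1..N}" "t \<in> piece n"
    using pieces_cover Suc.prems by blast
  then obtain s where s: "s \<in> {a..b}" "t = L n s"
    using piece_subset L_image by blast
  obtain w where "w \<in> words k" "s \<in> cylinder w"
    using Suc.IH[OF s(1)] by blast
  then have "n # w \<in> words (Suc k)" "t \<in> cylinder (n # w)"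
    using n s unfolding words_def by auto
  then show ?case
    by blast
qed

end

text \<open>
  \<open>T n\<close> stands for \<open>W\<^sub>n\<close> and \<open>G\<close> for the graph of \<open>f\<close>, to which the invariance equation
  is restricted; of the maps only their action \<open>\<pi> \<circ> T n = L n \<circ> \<pi>\<close> on \<open>G\<close> is assumed.
\<close>

locale ifs_invariant_measure = interval_ifs +
  fixes \<mu> :: "'c measure" and \<pi> :: "'c \<Rightarrow> real" and T :: "nat \<Rightarrow> 'c \<Rightarrow> 'c" and G :: "'c set"
    and p :: "nat \<Rightarrow> real"
  assumes prob_space_\<mu>: "prob_space \<mu>"
    and \<pi>_measurable: "\<pi> \<in> borel_measurable \<mu>"
    and G_subset_space: "G \<subseteq> space \<mu>"
    and \<pi>_G: "\<And>z. z \<in> G \<Longrightarrow> \<pi> z \<in> {a..b}"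
    and \<pi>_T: "\<And>n z. n \<in> {1..N} \<Longrightarrow> z \<in> G \<Longrightarrow> \<pi> (T n z) = L n (\<pi> z)"
    and p_nonneg: "\<And>n. n \<in> {1..N} \<Longrightarrow> 0 \<le> p n"
    and p_sum: "(\<Sum>n=1..N. p n) = 1"
    and invariant: "\<And>A. A \<in> sets \<mu> \<Longrightarrow>
      measure \<mu> A = (\<Sum>n=1..N. p n * measure \<mu> (T n -` A \<inter> G))"
begin

sublocale prob_space \<mu>
  by (rule prob_space_\<mu>)

lemma vimage_in_sets: "S \<in> sets borel \<Longrightarrow> \<pi> -` S \<inter> space \<mu> \<in> sets \<mu>"
  using \<pi>_measurable by (rule measurable_sets)

lemma measure_vimage_le:
  assumes S: "S \<in> sets borel" and Q: "\<And>m. m \<in> {1..N} \<Longrightarrow> Q m \<in> sets borel"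
    and L_vimage: "\<And>m t. m \<in> {1..N} \<Longrightarrow> t \<in> {a..b} \<Longrightarrow> L m t \<in> S \<Longrightarrow> t \<in> Q m"
  shows "measure \<mu> (\<pi> -` S \<inter> space \<mu>) \<le> (\<Sum>m=1..N. p m * measure \<mu> (\<pi> -` Q m \<inter> space \<mu>))"
proof -
  have "measure \<mu> (\<pi> -` S \<inter> space \<mu>) = (\<Sum>m=1..N. p m * measure \<mu> (T m -` (\<pi> -` S \<inter> space \<mu>) \<inter> G))"
    using vimage_in_sets[OF S] by (rule invariant)
  also have "\<dots> \<le> (\<Sum>m=1..N. p m * measure \<mu> (\<pi> -` Q m \<inter> space \<mu>))"
  proof (intro sum_mono mult_left_mono)
    fix m assume m: "m \<in> {1..N}"
    have "T m -` (\<pi> -` S \<inter> space \<mu>) \<inter> G \<subseteq> \<pi> -` Q m \<inter> space \<mu>"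
      using L_vimage[OF m] \<pi>_T[OF m] \<pi>_G G_subset_space by auto
    then show "measure \<mu> (T m -` (\<pi> -` S \<inter> space \<mu>) \<inter> G) \<le> measure \<mu> (\<pi> -` Q m \<inter> space \<mu>)"
      using vimage_in_sets[OF Q[OF m]] by (rule finite_measure_mono)
  qed (rule p_nonneg)
  finally show ?thesis .
qed

lemma measure_vimage_interval: "measure \<mu> (\<pi> -` {a..b} \<inter> space \<mu>) = 1"
proof -
  have "1 = measure \<mu> (\<pi> -` UNIV \<inter> space \<mu>)"
    by (simp add: prob_space)
  also have "\<dots> \<le> (\<Sum>m=1..N. p m * measure \<mu> (\<pi> -` {a..b} \<inter> space \<mu>))"
    by (rule measure_vimage_le) auto
  also have "\<dots> = measure \<mu> (\<pi> -` {a..b} \<inter> space \<mu>)"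
    using p_sum by (simp add: sum_distrib_right[symmetric])
  finally show ?thesis
    using prob_le_1 by (simp add: order_antisym)
qed

lemma compl_vimage_interval_null: "space \<mu> - \<pi> -` {a..b} \<in> null_sets \<mu>"
proof -
  have "space \<mu> - \<pi> -` {a..b} = space \<mu> - (\<pi> -` {a..b} \<inter> space \<mu>)"
    by blast
  moreover have "measure \<mu> (space \<mu> - (\<pi> -` {a..b} \<inter> space \<mu>)) = 0"
    using prob_compl[OF vimage_in_sets] measure_vimage_interval by simp
  ultimately show ?thesis
    using vimage_in_sets by (auto simp: emeasure_eq_measure intro!: null_setsI)
qed

text \<open>Only \<open>L\<^sub>N\<close> reaches \<open>b\<close>, so \<open>\<mu>{b} \<le> p\<^sub>N \<mu>{b}\<close>; hence \<open>b\<close> carries no mass unless \<open>p\<^sub>N = 1\<close>.\<close>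

lemma p_mult_atom_b_eq_0:
  assumes m: "m \<in> {1..N}" "m < N"
  shows "p m * measure \<mu> (\<pi> -` {b} \<inter> space \<mu>) = 0"
proof -
  let ?b = "measure \<mu> (\<pi> -` {b} \<inter> space \<mu>)"
  have "?b \<le> (\<Sum>k=1..N. p k * measure \<mu> (\<pi> -` (if k = N then {b} else {}) \<inter> space \<mu>))"
    using L_eq_bD by (intro measure_vimage_le) auto
  also have "\<dots> = (\<Sum>k=1..N. if k = N then p N * ?b else 0)"
    by (intro sum.cong) auto
  also have "\<dots> = p N * ?b"
    using N_pos by simp
  finally have b_le: "?b \<le> p N * ?b" .
  have "p m + p N \<le> 1"
  proof -
    have "p m + p N = (\<Sum>n\<in>{m, N}. p n)"
      using m by simp
    also have "\<dots> \<le> (\<Sum>n=1..N. p n)"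
      using m N_pos p_nonneg by (intro sum_mono2) auto
    finally show ?thesis
      using p_sum by simp
  qed
  then have "p m * ?b \<le> (1 - p N) * ?b"
    by (intro mult_right_mono) auto
  also have "\<dots> \<le> 0"
    using b_le by (simp add: algebra_simps)
  finally show ?thesis
    using p_nonneg[OF m(1)] by (intro order_antisym) simp_all
qed

definition mass :: "nat list \<Rightarrow> real" where
  "mass w = measure \<mu> (\<pi> -` cylinder w \<inter> space \<mu>)"

lemma mass_Nil: "mass [] = 1"
  unfolding mass_def by (simp add: measure_vimage_interval)

lemma mass_Cons_le:
  assumes n: "n \<in> {1..N}" and w: "set w \<subseteq> {1..N}"
  shows "mass (n # w) \<le> p n * mass w"
proof -
  define Q where "Q k = (if k = n then cylinder w else if k < N then {b} else {})" for k
  have "mass (n # w) \<le> (\<Sum>k=1..N. p k * measure \<mu> (\<pi> -` Q k \<inter> space \<mu>))"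
    unfolding mass_def
  proof (rule measure_vimage_le)
    show "cylinder (n # w) \<in> sets borel"
      using cylinder_in_borel[of "n # w"] n w by simp
    show "Q k \<in> sets borel" for k
      using cylinder_in_borel[OF w] by (simp add: Q_def)
    show "t \<in> Q k" if k: "k \<in> {1..N}" and t: "t \<in> {a..b}"
      and L_t: "L k t \<in> cylinder (n # w)" for k t
    proof (cases "k = n")
      case True
      then obtain s where "s \<in> cylinder w" "L n t = L n s"
        using L_t by auto
      moreover have "t = s"
        using inj_onD[OF L_inj_on[OF n] \<open>L n t = L n s\<close> t] cylinder_subset[OF w] \<open>s \<in> cylinder w\<close>
        by blast
      ultimately show ?thesis
        using True by (simp add: Q_def)
    next
      case False
      then show ?thesis
        using L_in_other_pieceD[OF k n False t] L_t by (simp add: Q_def)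
    qed
  qed
  also have "\<dots> = (\<Sum>k=1..N. if k = n then p n * mass w else 0)"
    using p_mult_atom_b_eq_0 by (intro sum.cong) (auto simp: Q_def mass_def)
  also have "\<dots> = p n * mass w"
    using n by simp
  finally show ?thesis .
qed

end

locale invariant_measure_pair = interval_ifs a b N x L +
  M: ifs_invariant_measure a b N x L \<mu> \<pi> T G p + V: ifs_invariant_measure a b N x L \<nu> \<pi> T' G' q
  for a b N x L \<mu> \<pi> T G p \<nu> T' G' q +
  assumes sets_eq: "sets \<nu> = sets \<mu>"
begin

lemma space_eq: "space \<nu> = space \<mu>"
  using sets_eq by (rule sets_eq_imp_space_eq)

lemma affinity_le_power:
  "(\<Sum>w\<in>words k. sqrt (M.mass w * V.mass w)) \<le> (\<Sum>n=1..N. sqrt (p n * q n)) ^ k"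
proof -
  have "sqrt (M.mass (n # w) * V.mass (n # w)) \<le> sqrt (p n * q n) * sqrt (M.mass w * V.mass w)"
    if "n \<in> {1..N}" "set w \<subseteq> {1..N}" for n w
  proof -
    have "M.mass (n # w) * V.mass (n # w) \<le> (p n * M.mass w) * (q n * V.mass w)"
      using that M.p_nonneg V.p_nonneg
      by (intro mult_mono M.mass_Cons_le V.mass_Cons_le) (auto simp: M.mass_def V.mass_def)
    then have "sqrt (M.mass (n # w) * V.mass (n # w)) \<le> sqrt ((p n * q n) * (M.mass w * V.mass w))"
      by (rule real_sqrt_le_mono[THEN order_trans]) (simp add: ac_simps)
    then show ?thesis
      by (simp add: real_sqrt_mult)
  qed
  then show ?thesis
    using sum_lists_length_le_power[of "{1..N}" "\<lambda>n. sqrt (p n * q n)" "\<lambda>w. sqrt (M.mass w * V.mass w)" k]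
      M.p_nonneg V.p_nonneg
    by (simp add: words_def M.mass_Nil V.mass_Nil)
qed

lemma separating_union_of_cylinders:
  "\<exists>A\<in>sets \<mu>. measure \<mu> A \<le> (\<Sum>n=1..N. sqrt (p n * q n)) ^ k
             \<and> measure \<nu> (space \<nu> - A) \<le> (\<Sum>n=1..N. sqrt (p n * q n)) ^ k"
proof -
  let ?C = "\<lambda>w. \<pi> -` cylinder w \<inter> space \<mu>"
  have C: "?C w \<in> sets \<mu>" if "w \<in> words k" for w
    using that M.vimage_in_sets cylinder_in_borel by (simp add: words_def)
  have "space \<nu> - (\<Union>w\<in>words k. ?C w) \<subseteq> space \<nu> - \<pi> -` {a..b}"
    using cylinders_cover by (fastforce simp: space_eq)
  moreover have "space \<nu> - (\<Union>w\<in>words k. ?C w) \<in> sets \<nu>"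
    using C finite_words sets_eq by (intro sets.Diff sets.finite_UN) auto
  ultimately have cover: "space \<nu> - (\<Union>w\<in>words k. ?C w) \<in> null_sets \<nu>"
    using V.compl_vimage_interval_null by (blast intro: null_sets_subset)
  obtain A where "A \<in> sets \<mu>"
    and "measure \<mu> A \<le> (\<Sum>w\<in>words k. sqrt (M.mass w * V.mass w))"
    and "measure \<nu> (space \<nu> - A) \<le> (\<Sum>w\<in>words k. sqrt (M.mass w * V.mass w))"
    using separating_set_of_affinity[OF M.finite_measure_axioms V.finite_measure_axioms sets_eq
        finite_words C cover] by (auto simp: M.mass_def V.mass_def space_eq)
  then show ?thesis
    using affinity_le_power[of k] by (blast intro: order_trans)
qed

lemma mutually_singular:
  assumes "\<exists>n\<in>{1..N}. p n \<noteq> q n"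
  shows "\<exists>A\<in>sets \<mu>. emeasure \<mu> A = 0 \<and> emeasure \<nu> (space \<nu> - A) = 0"
proof -
  define \<rho> where "\<rho> = (\<Sum>n=1..N. sqrt (p n * q n))"
  have "0 \<le> \<rho>"
    unfolding \<rho>_def using M.p_nonneg V.p_nonneg by (intro sum_nonneg) simp
  moreover have "\<rho> < 1"
    unfolding \<rho>_def using M.p_nonneg V.p_nonneg M.p_sum V.p_sum assms
    by (intro sum_sqrt_mult_less_one) auto
  ultimately have geometric: "summable (\<lambda>k. \<rho> ^ k)"
    by (simp add: summable_geometric)
  have "\<forall>k. \<exists>A. A \<in> sets \<mu> \<and> measure \<mu> A \<le> \<rho> ^ k \<and> measure \<nu> (space \<nu> - A) \<le> \<rho> ^ k"
    using separating_union_of_cylinders unfolding \<rho>_def by blast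
  from choice[OF this] obtain A where A: "\<And>k. A k \<in> sets \<mu>"
    and A_\<mu>: "\<And>k. measure \<mu> (A k) \<le> \<rho> ^ k" and A_\<nu>: "\<And>k. measure \<nu> (space \<nu> - A k) \<le> \<rho> ^ k"
    by blast
  have "summable (\<lambda>k. measure \<mu> (A k))"
    using A_\<mu> by (intro summable_comparison_test'[OF geometric]) simp
  moreover have "summable (\<lambda>k. measure \<nu> (space \<nu> - A k))"
    using A_\<nu> by (intro summable_comparison_test'[OF geometric]) simp
  ultimately show ?thesis
    by (rule mutually_singular_if_summable[OF M.finite_measure_axioms V.finite_measure_axioms sets_eq A])
qed

end

lemma (in interval_ifs) graph_invariant_measure:
  fixes M :: "(real \<times> 'b::topological_space) measure"
    and \<Omega> :: "nat \<Rightarrow> real \<Rightarrow> 'b \<Rightarrow> 'b" and f :: "real \<Rightarrow> 'b"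
  assumes sets_M: "sets M = sets borel" and "prob_space M"
    and "\<forall>n\<in>{1..N}. 0 \<le> r n" "(\<Sum>n=1..N. r n) = 1"
    and "\<forall>A\<in>sets borel. measure M A = (\<Sum>n=1..N. r n *
      measure M ((\<lambda>z. (L n (fst z), \<Omega> n (fst z) (snd z))) -` A \<inter> (\<lambda>t. (t, f t)) ` {a..b}))"
  shows "ifs_invariant_measure a b N x L M fst
    (\<lambda>n z. (L n (fst z), \<Omega> n (fst z) (snd z))) ((\<lambda>t. (t, f t)) ` {a..b}) r"
proof -
  have "fst \<in> borel_measurable M"
    by (simp add: measurable_cong_sets[OF sets_M refl] borel_measurable_continuous_onI continuous_on_fst)
  moreover have "space M = UNIV"
    using sets_eq_imp_space_eq[OF sets_M] by simp
  ultimately show ?thesis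
    using assms
    by (intro ifs_invariant_measure.intro[OF interval_ifs_axioms] ifs_invariant_measure_axioms.intro) auto
qed

theorem theorem3p4:
  fixes a b :: real and N :: nat and x :: "nat \<Rightarrow> real"
    and Y :: "nat \<Rightarrow> kreal"
    and L :: "nat \<Rightarrow> real \<Rightarrow> real" and \<gamma> :: "nat \<Rightarrow> real"
    and \<Omega> :: "nat \<Rightarrow> real \<Rightarrow> kreal \<Rightarrow> kreal" and \<phi> :: "nat \<Rightarrow> real \<Rightarrow> real"
    and f :: "real \<Rightarrow> kreal"
    and p q :: "nat \<Rightarrow> real"
    and \<mu> \<nu> :: "(real \<times> kreal) measure"
  assumes N_pos: "0 < N"
    and x_ends: "x 0 = a" "x N = b"
    and x_incr: "\<forall>k<N. x k < x (Suc k)"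
    and L_homeo: "\<forall>n\<in>{1..N}. \<exists>g. homeomorphism {a..b} {x (n - 1)..x n} (L n) g"
    and L_ends: "\<forall>n\<in>{1..N}. L n (x 0) = x (n - 1) \<and> L n (x N) = x n"
    and L_contr: "\<forall>n\<in>{1..N}. 0 < \<gamma> n \<and> \<gamma> n < 1 \<and>
                    (\<forall>s\<in>{a..b}. \<forall>t\<in>{a..b}. \<bar>L n s - L n t\<bar> \<le> \<gamma> n * \<bar>s - t\<bar>)"
    and \<Omega>_cont: "\<forall>n\<in>{1..N}. continuous_on ({a..b} \<times> UNIV) (\<lambda>z. \<Omega> n (fst z) (snd z))"
    and \<Omega>_ends: "\<forall>n\<in>{1..N}. \<Omega> n (x 0) (Y 0) = Y (n - 1) \<and> \<Omega> n (x N) (Y N) = Y n"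
    and \<Omega>_contr: "\<forall>n\<in>{1..N}. \<forall>s\<in>{a..b}. \<forall>U V. dist (\<Omega> n s U) (\<Omega> n s V) \<le> \<phi> n (dist U V)"
    and \<phi>_nonneg: "\<forall>n\<in>{1..N}. \<forall>t\<ge>0. 0 \<le> \<phi> n t"
    and \<phi>_mono: "\<forall>n\<in>{1..N}. mono_on {0..} (\<phi> n)"
    and \<phi>_ratio_less: "\<forall>n\<in>{1..N}. \<forall>t>0. \<phi> n t / t < 1"
    and \<phi>_ratio_decr: "\<forall>n\<in>{1..N}. \<forall>s t. 0 < s \<and> s \<le> t \<longrightarrow> \<phi> n t / t \<le> \<phi> n s / s"
    and f_cont: "continuous_on {a..b} f"
    and f_interp: "\<forall>k\<le>N. f (x k) = Y k"
    and f_fix: "\<forall>n\<in>{1..N}. \<forall>t\<in>{a..b}. f (L n t) = \<Omega> n t (f t)"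
    and p_prob: "(\<forall>n\<in>{1..N}. 0 \<le> p n) \<and> (\<Sum>n=1..N. p n) = 1"
    and q_prob: "(\<forall>n\<in>{1..N}. 0 \<le> q n) \<and> (\<Sum>n=1..N. q n) = 1"
    and p_ne_q: "\<exists>n\<in>{1..N}. p n \<noteq> q n"
    and \<mu>_borel: "sets \<mu> = sets borel" and \<mu>_prob: "prob_space \<mu>"
    and \<mu>_supp: "emeasure \<mu> ((\<lambda>t. (t, f t)) ` {a..b}) = 1"
    and \<mu>_inv: "\<forall>A\<in>sets borel. measure \<mu> A =
        (\<Sum>n=1..N. p n * measure \<mu> ((\<lambda>z. (L n (fst z), \<Omega> n (fst z) (snd z))) -` A
                                        \<inter> (\<lambda>t. (t, f t)) ` {a..b}))"
    and \<nu>_borel: "sets \<nu> = sets borel" and \<nu>_prob: "prob_space \<nu>"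
    and \<nu>_supp: "emeasure \<nu> ((\<lambda>t. (t, f t)) ` {a..b}) = 1"
    and \<nu>_inv: "\<forall>A\<in>sets borel. measure \<nu> A =
        (\<Sum>n=1..N. q n * measure \<nu> ((\<lambda>z. (L n (fst z), \<Omega> n (fst z) (snd z))) -` A
                                        \<inter> (\<lambda>t. (t, f t)) ` {a..b}))"
  shows "\<exists>A\<in>sets borel. emeasure \<mu> A = 0 \<and> emeasure \<nu> (UNIV - A) = 0"
proof -
  interpret interval_ifs a b N x L
    using N_pos x_ends x_incr L_homeo L_ends by unfold_locales auto
  let ?T = "\<lambda>n z. (L n (fst z), \<Omega> n (fst z) (snd z))" and ?G = "(\<lambda>t. (t, f t)) ` {a..b}"
  have "ifs_invariant_measure a b N x L \<mu> fst ?T ?G p"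
    using \<mu>_borel \<mu>_prob p_prob \<mu>_inv by (intro graph_invariant_measure) auto
  moreover have "ifs_invariant_measure a b N x L \<nu> fst ?T ?G q"
    using \<nu>_borel \<nu>_prob q_prob \<nu>_inv by (intro graph_invariant_measure) auto
  ultimately have "invariant_measure_pair a b N x L \<mu> fst ?T ?G p \<nu> ?T ?G q"
    using \<mu>_borel \<nu>_borel
    by (simp add: invariant_measure_pair_def invariant_measure_pair_axioms_def ifs_invariant_measure_def)
  then have "\<exists>A\<in>sets \<mu>. emeasure \<mu> A = 0 \<and> emeasure \<nu> (space \<nu> - A) = 0"
    using p_ne_q by (rule invariant_measure_pair.mutually_singular)
  then show ?thesis
    using \<mu>_borel sets_eq_imp_space_eq[OF \<nu>_borel] by simp
qed

end
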